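(* Let $A$ be a primitive axial algebra of Jordan type $\eta$ and let $a,b$ be distinct $\eta$-axes with $N=N_{a,b}$ $3$-dimensional. Let $V=N_{b,\,b^{\tau(a)}}$. Then either $V=N$, or $\eta=\tfrac12$, $N$ has an identity element $\mathbf 1$, and exactly one of the following holds: (i) $ab=-\tfrac12\mathbf 1+\tfrac12a+\tfrac12b$, $b\,b^{\tau(a)}=\tfrac12b+\tfrac12b^{\tau(a)}$, $\dim V=2$, and $\mathrm{Span}\{b,b^{\tau(a)}\}\cap\mathrm{Span}\{\mathbf 1,a\}=\mathbb F(\mathbf 1-a)$; (ii) $ab=-\tfrac14\mathbf 1+\tfrac12a+\tfrac12b$, $b\,b^{\tau(a)}=0$, $\dim V=2$, and $\mathrm{Span}\{b,b^{\tau(a)}\}\cap\mathrm{Span}\{\mathbf 1,a\}=\mathbb F\mathbf 1$.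
   Context: Throughout, $\mathbb F$ is a field of characteristic $\neq 2$ and $\eta\in\mathbb F\setminus\{0,1\}$. Let $A$ be a commutative, not necessarily associative $\mathbb F$-algebra. For $a\in A$ and $\lambda\in\mathbb F$ put $A_\lambda(a)=\{x\in A: xa=\lambda x\}$. An $\eta$-axis of $A$ is an element $a$ with $a^2=a$ such that $A=A_1(a)\oplus A_0(a)\oplus A_\eta(a)$, $A_1(a)=\mathbb F a$, and, writing $A_+(a)=A_1(a)\oplus A_0(a)$ and $A_-(a)=A_\eta(a)$, one has $A_+(a)A_+(a)\subseteq A_+(a)$, $A_+(a)A_-(a)\subseteq A_-(a)$, $A_-(a)A_-(a)\subseteq A_+(a)$ and $A_0(a)A_0(a)\subseteq A_0(a)$. $A$ is a primitive axial algebra of Jordan type $\eta$ if it is generated by $\eta$-axes. The Miyamoto involution $\tau(a)$ acts as $1$ on $A_+(a)$ and $-1$ on $A_-(a)$. $N_{x,y}$ is the subalgebra generated by $x,y$; an identity element of a subalgebra $N$ is $\mathbf 1\in N$ with $\mathbf 1n=n$ for all $n\in N$. *)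

theory Defs
  imports Complex_Main
begin

text \<open>An algebra over a field 'f is modelled by a vector space structure
  given by the scalar multiplication sc on the additive group 'v together with
  a multiplication mu, which is assumed (in the theorem) to be bilinear.\<close>

definition eigsp :: "('f::field \<Rightarrow> 'v::ab_group_add \<Rightarrow> 'v) \<Rightarrow> ('v \<Rightarrow> 'v \<Rightarrow> 'v) \<Rightarrow> 'v \<Rightarrow> 'f \<Rightarrow> 'v set" where
  "eigsp sc mu a l = {x. mu x a = sc l x}"

definition setsum :: "'v::ab_group_add set \<Rightarrow> 'v set \<Rightarrow> 'v set" where
  "setsum U W = {u + w | u w. u \<in> U \<and> w \<in> W}"

definition setprod :: "('v \<Rightarrow> 'v \<Rightarrow> 'v) \<Rightarrow> 'v set \<Rightarrow> 'v set \<Rightarrow> 'v set" where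
  "setprod mu U W = {mu u w | u w. u \<in> U \<and> w \<in> W}"

definition Aplus where "Aplus sc mu a = setsum (eigsp sc mu a 1) (eigsp sc mu a 0)"
definition Aminus where "Aminus sc mu eta a = eigsp sc mu a eta"

definition is_axis :: "('f::field \<Rightarrow> 'v::ab_group_add \<Rightarrow> 'v) \<Rightarrow> ('v \<Rightarrow> 'v \<Rightarrow> 'v) \<Rightarrow> 'f \<Rightarrow> 'v \<Rightarrow> bool" where
  "is_axis sc mu eta a \<longleftrightarrow>
     mu a a = a
   \<and> (\<forall>x. \<exists>!(x1, x0, xe). x1 \<in> eigsp sc mu a 1 \<and> x0 \<in> eigsp sc mu a 0 \<and> xe \<in> eigsp sc mu a eta
                         \<and> x = x1 + x0 + xe)
   \<and> eigsp sc mu a 1 = range (\<lambda>t. sc t a)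
   \<and> setprod mu (Aplus sc mu a) (Aplus sc mu a) \<subseteq> Aplus sc mu a
   \<and> setprod mu (Aplus sc mu a) (Aminus sc mu eta a) \<subseteq> Aminus sc mu eta a
   \<and> setprod mu (Aminus sc mu eta a) (Aminus sc mu eta a) \<subseteq> Aplus sc mu a
   \<and> setprod mu (eigsp sc mu a 0) (eigsp sc mu a 0) \<subseteq> eigsp sc mu a 0"

definition gen_subalg :: "('f::field \<Rightarrow> 'v::ab_group_add \<Rightarrow> 'v) \<Rightarrow> ('v \<Rightarrow> 'v \<Rightarrow> 'v) \<Rightarrow> 'v set \<Rightarrow> 'v set" where
  "gen_subalg sc mu S = \<Inter>{W. S \<subseteq> W \<and> module.subspace sc W \<and> (\<forall>x\<in>W. \<forall>y\<in>W. mu x y \<in> W)}"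

definition primitive_axial_jordan :: "('f::field \<Rightarrow> 'v::ab_group_add \<Rightarrow> 'v) \<Rightarrow> ('v \<Rightarrow> 'v \<Rightarrow> 'v) \<Rightarrow> 'f \<Rightarrow> bool" where
  "primitive_axial_jordan sc mu eta \<longleftrightarrow>
     (\<exists>X. (\<forall>x\<in>X. is_axis sc mu eta x) \<and> gen_subalg sc mu X = UNIV)"

definition miyamoto :: "('f::field \<Rightarrow> 'v::ab_group_add \<Rightarrow> 'v) \<Rightarrow> ('v \<Rightarrow> 'v \<Rightarrow> 'v) \<Rightarrow> 'f \<Rightarrow> 'v \<Rightarrow> 'v \<Rightarrow> 'v" where
  "miyamoto sc mu eta a x =
     (THE y. \<exists>u w. u \<in> Aplus sc mu a \<and> w \<in> Aminus sc mu eta a \<and> x = u + w \<and> y = u - w)"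

definition is_identity_of :: "('v \<Rightarrow> 'v \<Rightarrow> 'v) \<Rightarrow> 'v set \<Rightarrow> 'v \<Rightarrow> bool" where
  "is_identity_of mu N e \<longleftrightarrow> e \<in> N \<and> (\<forall>n\<in>N. mu e n = n)"

end

theory Submission
  imports Defs
begin

text \<open>Decompose \<open>b = \<phi> a + b\<^sub>0 + b\<^sub>1\<close> into eigenvectors of the axis \<open>a\<close>. Comparing
  eigencomponents in \<open>b b = b\<close>, and computing \<open>b (b a)\<close> once from these components and once
  from the decomposition of \<open>a\<close> with respect to the axis \<open>b\<close>, determines all products of
  \<open>a, b\<^sub>0, b\<^sub>1\<close> in terms of \<open>\<phi>\<close> and \<open>\<eta>\<close>. Since \<open>dim N = 3\<close>, these vectors form a basis
  of \<open>N\<close>, in which \<open>b = (\<phi>, 1, 1)\<close> and its Miyamoto image is \<open>c = (\<phi>, 1, -1)\<close>. If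
  \<open>\<phi> (2\<phi> - \<eta> - 1/2) \<noteq> 0\<close>, the subalgebra generated by \<open>b\<close> and \<open>c\<close> contains \<open>a\<close>, so \<open>V = N\<close>.
  Otherwise the relation between \<open>\<phi>\<close> and the coefficient \<open>\<psi>\<close> of \<open>b\<close> in \<open>a\<close>, together
  with its mirror image, forces \<open>\<psi> = \<phi>\<close>, \<open>\<eta> = 1/2\<close> and \<open>\<phi> \<in> {0, 1/2}\<close>; a computation in
  the basis gives (i) for \<open>\<phi> = 0\<close> and (ii) for \<open>\<phi> = 1/2\<close>.\<close>

section \<open>Commutative algebras and axes\<close>

context vector_space
begin

lemma mem_span_pair_iff: "x \<in> span {u, v} \<longleftrightarrow> (\<exists>s t. x = s *s u + t *s v)"
proof -
  have "x \<in> span {u, v} \<longleftrightarrow> (\<exists>s t. x - s *s u = t *s v)"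
    unfolding span_breakdown_eq span_singleton by (auto simp: image_iff eq_commute)
  then show ?thesis
    by (simp add: diff_eq_eq add.commute)
qed

lemma range_scale_rescale:
  assumes "k \<noteq> 0"
  shows "range (\<lambda>t. t *s (k *s x)) = range (\<lambda>t. t *s x)"
proof
  show "range (\<lambda>t. t *s (k *s x)) \<subseteq> range (\<lambda>t. t *s x)"
    by auto
  have "t *s x = (t / k) *s (k *s x)" for t
    using assms by simp
  then show "range (\<lambda>t. t *s x) \<subseteq> range (\<lambda>t. t *s (k *s x))"
    by (metis image_subsetI rangeI)
qed

lemma dim_span_three_le_two:
  assumes "0 \<in> {u, v, w}"
  shows "dim (span {u, v, w}) \<le> 2"
proof -
  obtain p q where pq: "{u, v, w} - {0} \<subseteq> {p, q}"
    using assms by auto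
  have "span {u, v, w} \<subseteq> span {p, q}"
    using span_mono[OF pq] by simp
  then have "dim (span {u, v, w}) \<le> card {p, q}"
    by (rule dim_le_card) simp
  also have "\<dots> \<le> 2"
    by (simp add: card_insert_if)
  finally show ?thesis .
qed

end

locale comm_algebra = vector_space sc
  for sc :: "'f::field \<Rightarrow> 'v::ab_group_add \<Rightarrow> 'v" +
  fixes mu :: "'v \<Rightarrow> 'v \<Rightarrow> 'v"
  assumes mult_add_right: "mu x (y + z) = mu x y + mu x z"
    and mult_scale_right: "mu x (sc c y) = sc c (mu x y)"
    and mult_commute: "mu x y = mu y x"
begin

lemma mult_add_left: "mu (x + y) z = mu x z + mu y z"
  using mult_add_right mult_commute by metis

lemma mult_scale_left: "mu (sc c x) y = sc c (mu x y)"
  using mult_scale_right mult_commute by metis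

lemma mult_zero_right [simp]: "mu x 0 = 0"
  using mult_scale_right[of x 0 0] by simp

lemma mult_zero_left [simp]: "mu 0 x = 0"
  using mult_zero_right mult_commute by metis

lemmas mult_linear = mult_add_right mult_add_left mult_scale_right mult_scale_left

lemma mult_span_closed:
  assumes G: "\<And>g h. g \<in> G \<Longrightarrow> h \<in> G \<Longrightarrow> mu g h \<in> span G"
    and x: "x \<in> span G" and y: "y \<in> span G"
  shows "mu x y \<in> span G"
proof -
  have gen_mult: "mu g y \<in> span G" if "g \<in> G" for g
    using y by (induction rule: span_induct)
      (auto simp: subspace_def span_zero span_add span_scale mult_add_right mult_scale_right
        intro: G[OF that])
  from x show ?thesis
    by (induction rule: span_induct)
      (auto simp: subspace_def span_zero span_add span_scale mult_add_left mult_scale_left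
        intro: gen_mult)
qed

lemma gen_subalg_subspace: "subspace (gen_subalg sc mu S)"
  unfolding gen_subalg_def by (rule subspace_Inter) blast

lemma gen_subalg_mult_closed:
  "x \<in> gen_subalg sc mu S \<Longrightarrow> y \<in> gen_subalg sc mu S \<Longrightarrow> mu x y \<in> gen_subalg sc mu S"
  unfolding gen_subalg_def by blast

lemma gen_subalg_base: "S \<subseteq> gen_subalg sc mu S"
  unfolding gen_subalg_def by blast

lemma gen_subalg_minimal:
  "S \<subseteq> X \<Longrightarrow> subspace X \<Longrightarrow> (\<And>x y. x \<in> X \<Longrightarrow> y \<in> X \<Longrightarrow> mu x y \<in> X)
    \<Longrightarrow> gen_subalg sc mu S \<subseteq> X"
  unfolding gen_subalg_def by blast

lemma gen_subalg_eq_span: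
  assumes "\<And>g h. g \<in> G \<Longrightarrow> h \<in> G \<Longrightarrow> mu g h \<in> span G"
    and "S \<subseteq> span G" and "G \<subseteq> gen_subalg sc mu S"
  shows "gen_subalg sc mu S = span G"
proof
  show "gen_subalg sc mu S \<subseteq> span G"
    using assms(1,2) by (intro gen_subalg_minimal) (auto intro: mult_span_closed)
  show "span G \<subseteq> gen_subalg sc mu S"
    using assms(3) gen_subalg_subspace by (rule span_minimal)
qed

lemma frame_products_in_span:
  assumes "mu a a = a" "mu a v = 0" "mu a w = sc e w"
    and "mu v v = sc p v" "mu v w = sc c w" "mu w w = sc \<alpha> a + sc \<beta> v"
    and "g \<in> {a, v, w}" "h \<in> {a, v, w}"
  shows "mu g h \<in> span {a, v, w}"
proof -
  have "mu a v = mu v a" "mu a w = mu w a" "mu v w = mu w v"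
    by (simp_all add: mult_commute)
  with assms show ?thesis
    by (auto simp: span_base span_add span_scale span_zero)
qed

lemma mem_eigsp_iff: "x \<in> eigsp sc mu a l \<longleftrightarrow> mu a x = sc l x"
  by (simp add: eigsp_def mult_commute)

lemma eigsp_subspace: "subspace (eigsp sc mu a l)"
  unfolding subspace_def
  by (auto simp: mem_eigsp_iff mult_add_right mult_scale_right scale_right_distrib mult.commute)

lemma axis_idem: "is_axis sc mu eta a \<Longrightarrow> mu a a = a"
  by (simp add: is_axis_def)

lemma axis_eigsp_one: "is_axis sc mu eta a \<Longrightarrow> eigsp sc mu a 1 = range (\<lambda>t. sc t a)"
  by (simp add: is_axis_def)

lemma axis_scale_mem_eigsp_one: "is_axis sc mu eta a \<Longrightarrow> sc t a \<in> eigsp sc mu a 1"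
  by (auto simp: axis_eigsp_one)

lemma axis_decomp_ex1:
  "is_axis sc mu eta a \<Longrightarrow> \<exists>!(x1, x0, xe). x1 \<in> eigsp sc mu a 1 \<and> x0 \<in> eigsp sc mu a 0
      \<and> xe \<in> eigsp sc mu a eta \<and> x = x1 + x0 + xe"
  unfolding is_axis_def by (elim conjE) (erule spec)

lemma axis_decomp:
  assumes "is_axis sc mu eta a"
  obtains t x0 xe where "x = sc t a + x0 + xe" "x0 \<in> eigsp sc mu a 0" "xe \<in> eigsp sc mu a eta"
proof -
  obtain x1 x0 xe where "x1 \<in> eigsp sc mu a 1" "x0 \<in> eigsp sc mu a 0"
      "xe \<in> eigsp sc mu a eta" "x = x1 + x0 + xe"
    using axis_decomp_ex1[OF assms, of x] by (auto dest!: ex1_implies_ex)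
  with axis_eigsp_one[OF assms] that show ?thesis by auto
qed

lemma axis_decomp_unique:
  assumes ax: "is_axis sc mu eta a"
    and x: "x1 \<in> eigsp sc mu a 1" "x0 \<in> eigsp sc mu a 0" "xe \<in> eigsp sc mu a eta"
    and y: "y1 \<in> eigsp sc mu a 1" "y0 \<in> eigsp sc mu a 0" "ye \<in> eigsp sc mu a eta"
    and eq: "x1 + x0 + xe = y1 + y0 + ye"
  shows "x1 = y1 \<and> x0 = y0 \<and> xe = ye"
proof -
  obtain p where p: "\<And>q. (case q of (z1, z0, ze) \<Rightarrow> z1 \<in> eigsp sc mu a 1
      \<and> z0 \<in> eigsp sc mu a 0 \<and> ze \<in> eigsp sc mu a eta \<and> y1 + y0 + ye = z1 + z0 + ze) \<Longrightarrow> q = p"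
    using axis_decomp_ex1[OF ax, of "y1 + y0 + ye"] by (metis (no_types, lifting) ex1E)
  have "(x1, x0, xe) = p"
    using x eq by (intro p) simp
  moreover have "(y1, y0, ye) = p"
    using y by (intro p) simp
  ultimately show ?thesis
    by (metis prod.inject)
qed

lemma miyamoto_axis_decomp:
  assumes ax: "is_axis sc mu eta a"
    and x: "x = sc t a + x0 + xe" "x0 \<in> eigsp sc mu a 0" "xe \<in> eigsp sc mu a eta"
  shows "miyamoto sc mu eta a x = sc t a + x0 - xe"
  unfolding miyamoto_def
proof (rule the_equality)
  have "sc t a + x0 \<in> Aplus sc mu a"
    unfolding Aplus_def setsum_def using x(2) axis_scale_mem_eigsp_one[OF ax] by blast
  moreover have "xe \<in> Aminus sc mu eta a"
    using x(3) by (simp add: Aminus_def)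
  ultimately show "\<exists>u w. u \<in> Aplus sc mu a \<and> w \<in> Aminus sc mu eta a \<and> x = u + w
      \<and> sc t a + x0 - xe = u - w"
    using x(1) by fastforce
next
  fix y assume "\<exists>u w. u \<in> Aplus sc mu a \<and> w \<in> Aminus sc mu eta a \<and> x = u + w \<and> y = u - w"
  then obtain u1 u0 w where "u1 \<in> eigsp sc mu a 1" "u0 \<in> eigsp sc mu a 0"
      "w \<in> eigsp sc mu a eta" "x = u1 + u0 + w" "y = u1 + u0 - w"
    unfolding Aplus_def Aminus_def setsum_def by blast
  with axis_decomp_unique[OF ax _ _ _ axis_scale_mem_eigsp_one[OF ax] x(2,3)] x(1)
  show "y = sc t a + x0 - xe" by metis
qed

lemma axis_fusion_zero_zero:
  assumes "is_axis sc mu eta a" "x \<in> eigsp sc mu a 0" "y \<in> eigsp sc mu a 0"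
  shows "mu x y \<in> eigsp sc mu a 0"
proof -
  have "setprod mu (eigsp sc mu a 0) (eigsp sc mu a 0) \<subseteq> eigsp sc mu a 0"
    using assms(1) by (simp add: is_axis_def)
  with assms(2,3) show ?thesis
    unfolding setprod_def by blast
qed

lemma eigsp_zero_subset_Aplus: "eigsp sc mu a 0 \<subseteq> Aplus sc mu a"
  unfolding Aplus_def setsum_def using eigsp_subspace[THEN subspace_0] by force

lemma axis_fusion_zero_eta:
  assumes "is_axis sc mu eta a" "x \<in> eigsp sc mu a 0" "y \<in> eigsp sc mu a eta"
  shows "mu x y \<in> eigsp sc mu a eta"
proof -
  have "setprod mu (Aplus sc mu a) (Aminus sc mu eta a) \<subseteq> Aminus sc mu eta a"
    using assms(1) by (simp add: is_axis_def)
  with assms(2,3) eigsp_zero_subset_Aplus show ?thesis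
    unfolding setprod_def Aminus_def by blast
qed

lemma axis_fusion_eta_eta:
  assumes ax: "is_axis sc mu eta a" and "x \<in> eigsp sc mu a eta" "y \<in> eigsp sc mu a eta"
  obtains t u where "mu x y = sc t a + u" "u \<in> eigsp sc mu a 0"
proof -
  have "setprod mu (Aminus sc mu eta a) (Aminus sc mu eta a) \<subseteq> Aplus sc mu a"
    using ax by (simp add: is_axis_def)
  with assms(2,3) obtain x1 u where "x1 \<in> eigsp sc mu a 1" "u \<in> eigsp sc mu a 0" "mu x y = x1 + u"
    unfolding setprod_def Aminus_def Aplus_def setsum_def by blast
  with axis_eigsp_one[OF ax] that show ?thesis
    by auto
qed

lemma axis_mult_twice:
  assumes ax: "is_axis sc mu eta b"
    and x: "x = sc t b + x0 + xe" "x0 \<in> eigsp sc mu b 0" "xe \<in> eigsp sc mu b eta"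
  shows "mu b (mu b x) = sc eta (mu b x) + sc (t * (1 - eta)) b"
proof -
  have bx: "mu b x = sc t b + sc eta xe"
    using x axis_idem[OF ax] by (simp add: mem_eigsp_iff mult_linear)
  have "mu b (mu b x) = sc t b + sc (eta * eta) xe"
    using x(3) axis_idem[OF ax] by (simp add: bx mem_eigsp_iff mult_linear)
  then show ?thesis
    by (simp add: bx scale_right_distrib scale_left_diff_distrib algebra_simps)
qed

end

section \<open>Products of eigencomponents\<close>

locale jordan_type = comm_algebra sc mu
  for sc :: "'f::field \<Rightarrow> 'v::ab_group_add \<Rightarrow> 'v" and mu +
  fixes eta :: 'f
  assumes two_nonzero: "(2::'f) \<noteq> 0"
    and eta_nonzero: "eta \<noteq> 0" and eta_ne_one: "eta \<noteq> 1"
begin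

lemma four_nonzero: "(4::'f) \<noteq> 0"
  using two_nonzero by (metis mult_2_right numeral_Bit0 no_zero_divisors)

lemma idempotent_decomp_products:
  assumes ax: "is_axis sc mu eta a" and idem: "mu b b = b"
    and b: "b = sc t a + b0 + b1" "b0 \<in> eigsp sc mu a 0" "b1 \<in> eigsp sc mu a eta"
  shows "mu b0 b1 = sc (1/2 - t * eta) b1" and "mu b1 b1 = sc (t - t * t) a + (b0 - mu b0 b0)"
proof -
  obtain s u where b11: "mu b1 b1 = sc s a + u" and u: "u \<in> eigsp sc mu a 0"
    using axis_fusion_eta_eta[OF ax b(3) b(3)] by blast
  have ab: "mu a a = a" "mu a b0 = 0" "mu a b1 = sc eta b1"
    using axis_idem[OF ax] b(2,3) by (auto simp: mem_eigsp_iff)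
  have ba: "mu b0 a = 0" "mu b1 a = sc eta b1" "mu b1 b0 = mu b0 b1"
    using ab mult_commute by metis+
  define w where "w = sc (t * eta) b1 + mu b0 b1"
  have "sc (t * t + s) a + (mu b0 b0 + u) + (w + w) = sc t a + b0 + b1"
    using idem unfolding b(1) w_def
    by (simp add: mult_linear ab ba b11 scale_left_distrib algebra_simps)
  moreover have "mu b0 b0 + u \<in> eigsp sc mu a 0"
    using axis_fusion_zero_zero[OF ax b(2) b(2)] u by (rule subspace_add[OF eigsp_subspace])
  moreover have "w + w \<in> eigsp sc mu a eta"
    using axis_fusion_zero_eta[OF ax b(2) b(3)] b(3) unfolding w_def
    by (intro subspace_add[OF eigsp_subspace] subspace_scale[OF eigsp_subspace])
  ultimately have a_part: "sc (t * t + s) a = sc t a" and zero_part: "mu b0 b0 + u = b0"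
    and eta_part: "w + w = b1"
    using axis_decomp_unique[OF ax axis_scale_mem_eigsp_one[OF ax] _ _
        axis_scale_mem_eigsp_one[OF ax] b(2,3)]
    by blast+
  have "w = sc (1/2) (sc 2 w)"
    using two_nonzero by simp
  also have "sc 2 w = b1"
    using eta_part by (metis one_add_one scale_left_distrib scale_one)
  finally have "sc (t * eta) b1 + mu b0 b1 = sc (1/2) b1"
    unfolding w_def .
  then show "mu b0 b1 = sc (1/2 - t * eta) b1"
    by (simp add: scale_left_diff_distrib eq_diff_eq add.commute)
  have "sc s a = sc (t - t * t) a"
    using a_part by (simp add: scale_left_distrib scale_left_diff_distrib eq_diff_eq add.commute)
  with b11 zero_part show "mu b1 b1 = sc (t - t * t) a + (b0 - mu b0 b0)"
    by (simp add: eq_diff_eq add.commute)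
qed

lemma axis_pair_relations:
  assumes ax_a: "is_axis sc mu eta a" and ax_b: "is_axis sc mu eta b"
    and b: "b = sc t a + b0 + b1" "b0 \<in> eigsp sc mu a 0" "b1 \<in> eigsp sc mu a eta"
    and a: "a = sc s b + a0 + a1" "a0 \<in> eigsp sc mu b 0" "a1 \<in> eigsp sc mu b eta"
  shows "sc eta (b0 - mu b0 b0) = sc (s * (1 - eta)) b0"
    and "sc (t * eta + eta / 2) b1 = sc (eta * eta + s * (1 - eta)) b1"
proof -
  define u where "u = b0 - mu b0 b0"
  have u: "u \<in> eigsp sc mu a 0"
    unfolding u_def using b(2) axis_fusion_zero_zero[OF ax_a b(2) b(2)]
    by (rule subspace_diff[OF eigsp_subspace])
  note b01 = idempotent_decomp_products(1)[OF ax_a axis_idem[OF ax_b] b]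
  note b11 = idempotent_decomp_products(2)[OF ax_a axis_idem[OF ax_b] b, folded u_def]
  have ab: "mu a a = a" "mu a b0 = 0" "mu a b1 = sc eta b1"
    using axis_idem[OF ax_a] b(2,3) by (auto simp: mem_eigsp_iff)
  have "mu a b = sc t a + sc eta b1"
    unfolding b(1) by (simp add: mult_linear ab)
  then have ba: "mu b a = sc t a + sc eta b1"
    by (simp add: mult_commute)
  have bb1: "mu b b1 = sc (t - t * t) a + u + sc (1/2) b1"
    unfolding b(1) by (simp add: mult_linear ab b01 b11 scale_left_diff_distrib algebra_simps)
  define s' where "s' = s * (1 - eta)"
  \<comment> \<open>\<open>b (b a)\<close> computed from the components of \<open>b\<close> and from the decomposition of \<open>a\<close>\<close>
  have "sc (t * t + eta * (t - t * t)) a + sc eta u + sc (t * eta + eta / 2) b1 = mu b (mu b a)"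
    unfolding ba by (simp add: mult_linear ba bb1 scale_left_distrib scale_right_distrib
        algebra_simps)
  also have "\<dots> = sc eta (mu b a) + sc s' b"
    unfolding s'_def by (rule axis_mult_twice[OF ax_b a])
  also have "\<dots> = sc (eta * t + s' * t) a + sc s' b0 + sc (eta * eta + s') b1"
    by (subst (2) b(1)) (simp add: ba scale_left_distrib scale_right_distrib algebra_simps)
  finally have "sc eta u = sc s' b0 \<and> sc (t * eta + eta / 2) b1 = sc (eta * eta + s') b1"
    using axis_decomp_unique[OF ax_a axis_scale_mem_eigsp_one[OF ax_a] _ _
        axis_scale_mem_eigsp_one[OF ax_a]] u b(2,3)
    by (blast intro: subspace_scale[OF eigsp_subspace])
  then show "sc eta (b0 - mu b0 b0) = sc (s * (1 - eta)) b0"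
    and "sc (t * eta + eta / 2) b1 = sc (eta * eta + s * (1 - eta)) b1"
    unfolding u_def s'_def by auto
qed

lemma gen_subalg_pair_eq_span_frame:
  assumes "mu a a = a" "mu a b0 = 0" "mu a b1 = sc eta b1"
    and "mu b0 b0 = sc p b0" "mu b0 b1 = sc c b1" "mu b1 b1 = sc \<alpha> a + sc \<beta> b0"
    and b: "b = sc t a + b0 + b1"
  shows "gen_subalg sc mu {a, b} = span {a, b0, b1}"
proof (rule gen_subalg_eq_span)
  show "mu g h \<in> span {a, b0, b1}" if "g \<in> {a, b0, b1}" "h \<in> {a, b0, b1}" for g h
    using frame_products_in_span[OF assms(1-6) that] .
  show "{a, b} \<subseteq> span {a, b0, b1}"
    unfolding b by (simp add: span_base span_add span_scale)
  let ?N = "gen_subalg sc mu {a, b}"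
  have a: "a \<in> ?N" and "b \<in> ?N"
    using gen_subalg_base by blast+
  have "mu a b - sc t a = sc eta b1"
    unfolding b using assms(1-3) by (simp add: mult_linear)
  then have "b1 = sc (1 / eta) (mu a b - sc t a)"
    using eta_nonzero by simp
  then have b1: "b1 \<in> ?N"
    using a \<open>b \<in> ?N\<close> gen_subalg_mult_closed
    by (simp add: subspace_scale subspace_diff gen_subalg_subspace)
  have "b0 = b - sc t a - b1"
    unfolding b by simp
  then have "b0 \<in> ?N"
    using a b1 \<open>b \<in> ?N\<close> by (simp add: subspace_scale subspace_diff gen_subalg_subspace)
  with a b1 show "{a, b0, b1} \<subseteq> ?N"
    by blast
qed

end

section \<open>Coordinates in a frame of eigenvectors\<close>

locale eigen_frame = jordan_type sc mu eta
  for sc :: "'f::field \<Rightarrow> 'v::ab_group_add \<Rightarrow> 'v" and mu eta +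
  fixes a v w :: 'v
  assumes frame_idem: "mu a a = a" and frame_zero: "mu a v = 0" and frame_eta: "mu a w = sc eta w"
    and frame_nonzero: "a \<noteq> 0" "v \<noteq> 0" "w \<noteq> 0"
begin

definition comb :: "'f \<Rightarrow> 'f \<Rightarrow> 'f \<Rightarrow> 'v" where
  "comb x y z = sc x a + sc y v + sc z w"

lemma comb_add: "comb x y z + comb x' y' z' = comb (x + x') (y + y') (z + z')"
  by (simp add: comb_def scale_left_distrib algebra_simps)

lemma comb_diff: "comb x y z - comb x' y' z' = comb (x - x') (y - y') (z - z')"
  by (simp add: comb_def scale_left_diff_distrib algebra_simps)

lemma comb_scale: "sc c (comb x y z) = comb (c * x) (c * y) (c * z)"
  by (simp add: comb_def scale_right_distrib)

lemma comb_basis: "comb 1 0 0 = a" "comb 0 1 0 = v" "comb 0 0 1 = w"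
  by (simp_all add: comb_def)

lemma scale_a_eq_comb: "sc r a = comb r 0 0"
  by (simp add: comb_def)

lemma mult_a_comb: "mu a (comb x y z) = comb x 0 (eta * z)"
  by (simp add: comb_def mult_linear frame_idem frame_zero frame_eta)

lemma comb_eq_zero_iff: "comb x y z = 0 \<longleftrightarrow> x = 0 \<and> y = 0 \<and> z = 0"
proof
  assume xyz: "comb x y z = 0"
  \<comment> \<open>multiplication by \<open>a\<close> scales the coordinates by the distinct eigenvalues \<open>1, 0, \<eta>\<close>\<close>
  then have "mu a (mu a (comb x y z)) = 0"
    by simp
  then have "comb x 0 (eta * (eta * z)) = 0"
    by (simp add: mult_a_comb)
  moreover have "comb x 0 (eta * z) = 0"
    using xyz mult_a_comb by (metis mult_zero_right)
  ultimately have "sc eta (comb x 0 (eta * z)) - comb x 0 (eta * (eta * z)) = 0"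
    by simp
  then have "sc ((eta - 1) * x) a = 0"
    by (simp add: comb_scale comb_diff comb_def algebra_simps)
  then have x: "x = 0"
    using frame_nonzero eta_ne_one by simp
  with \<open>comb x 0 (eta * z) = 0\<close> have z: "z = 0"
    using frame_nonzero eta_nonzero by (simp add: comb_def)
  with xyz x show "x = 0 \<and> y = 0 \<and> z = 0"
    using frame_nonzero by (simp add: comb_def)
qed (simp add: comb_def)

lemma comb_eq_iff: "comb x y z = comb x' y' z' \<longleftrightarrow> x = x' \<and> y = y' \<and> z = z'"
  using comb_eq_zero_iff[of "x - x'" "y - y'" "z - z'"] by (auto simp: comb_diff[symmetric])

lemma mem_span_frame_iff: "u \<in> span {a, v, w} \<longleftrightarrow> (\<exists>x y z. u = comb x y z)"
proof -
  have "u \<in> span {a, v, w} \<longleftrightarrow> (\<exists>x y z. u - sc x a = sc y v + sc z w)"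
    unfolding span_breakdown_eq[of u a] mem_span_pair_iff by blast
  then show ?thesis
    by (simp add: comb_def diff_eq_eq add.commute add.left_commute)
qed

end

text \<open>A pair frame comes from the decomposition \<open>b = \<phi> a + v + w\<close> of a second axis \<open>b\<close>, so
  \<open>b = comb \<phi> 1 1\<close> and its Miyamoto image is \<open>comb \<phi> 1 (-1)\<close>.\<close>

locale pair_frame = eigen_frame sc mu eta a v w
  for sc :: "'f::field \<Rightarrow> 'v::ab_group_add \<Rightarrow> 'v" and mu eta a v w +
  fixes phi :: 'f
  assumes frame_table: "mu v v = sc (1/2 + eta - phi) v" "mu v w = sc (1/2 - phi * eta) w"
      "mu w w = sc (phi - phi * phi) a + sc (1/2 - eta + phi) v"
begin

lemma mult_comb:
  "mu (comb x y z) (comb x' y' z') =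
    comb (x * x' + (phi - phi * phi) * z * z') ((1/2 + eta - phi) * y * y' + (1/2 - eta + phi) * z * z')
      (eta * (x * z' + z * x') + (1/2 - phi * eta) * (y * z' + z * y'))"
proof -
  have comm: "mu v a = 0" "mu w a = sc eta w" "mu w v = sc (1/2 - phi * eta) w"
    using frame_zero frame_eta frame_table(2) mult_commute by metis+
  show ?thesis
    unfolding comb_def
    by (simp add: mult_linear frame_idem frame_zero frame_eta frame_table comm
        scale_left_distrib scale_left_diff_distrib scale_right_distrib algebra_simps)
qed

end

context jordan_type
begin

lemma axis_pair_frame:
  assumes ax_a: "is_axis sc mu eta a" and ax_b: "is_axis sc mu eta b"
    and dimN: "dim (gen_subalg sc mu {a, b}) = 3"
    and b: "b = sc t a + b0 + b1" "b0 \<in> eigsp sc mu a 0" "b1 \<in> eigsp sc mu a eta"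
    and a: "a = sc s b + a0 + a1" "a0 \<in> eigsp sc mu b 0" "a1 \<in> eigsp sc mu b eta"
  shows "pair_frame sc mu eta a b0 b1 t"
    and "gen_subalg sc mu {a, b} = span {a, b0, b1}"
    and "s * (1 - eta) = eta * (1/2 - eta + t)"
proof -
  define \<beta> where "\<beta> = s * (1 - eta) / eta"
  have ab: "mu a a = a" "mu a b0 = 0" "mu a b1 = sc eta b1"
    using axis_idem[OF ax_a] b(2,3) by (auto simp: mem_eigsp_iff)
  note b01 = idempotent_decomp_products(1)[OF ax_a axis_idem[OF ax_b] b]
  note rel = axis_pair_relations[OF ax_a ax_b b a]
  have "b0 - mu b0 b0 = sc (1 / eta) (sc eta (b0 - mu b0 b0))"
    using eta_nonzero by simp
  then have b00': "b0 - mu b0 b0 = sc \<beta> b0"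
    unfolding rel(1) \<beta>_def by simp
  have "mu b0 b0 = b0 - (b0 - mu b0 b0)"
    by simp
  then have b00: "mu b0 b0 = sc (1 - \<beta>) b0"
    unfolding b00' by (simp add: scale_left_diff_distrib)
  have b11: "mu b1 b1 = sc (t - t * t) a + sc \<beta> b0"
    using idempotent_decomp_products(2)[OF ax_a axis_idem[OF ax_b] b] b00' by simp
  show N: "gen_subalg sc mu {a, b} = span {a, b0, b1}"
    using gen_subalg_pair_eq_span_frame[OF ab b00 b01 b11 b(1)] .
  \<comment> \<open>\<open>dim N = 3\<close> makes the frame nondegenerate, and \<open>b1 \<noteq> 0\<close> then determines \<open>s\<close>\<close>
  have nonzero: "a \<noteq> 0" "b0 \<noteq> 0" "b1 \<noteq> 0"
    using dim_span_three_le_two[of a b0 b1] dimN unfolding N by auto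
  with rel(2) have "t * eta + eta / 2 = eta * eta + s * (1 - eta)"
    by simp
  then show "s * (1 - eta) = eta * (1/2 - eta + t)"
    by (simp add: algebra_simps)
  then have "\<beta> = 1/2 - eta + t"
    unfolding \<beta>_def using eta_nonzero by simp
  moreover from this have "1 - \<beta> = 1/2 + eta - t"
    using two_nonzero by (simp add: field_simps)
  ultimately show "pair_frame sc mu eta a b0 b1 t"
    using ab nonzero b01 b00 b11 by unfold_locales simp_all
qed

end

context pair_frame
begin

lemma gen_subalg_tau_pair_eq_span_frame:
  assumes D: "phi * (2 * phi - eta - 1/2) \<noteq> 0"
  shows "gen_subalg sc mu {comb phi 1 1, comb phi 1 (-1)} = span {a, v, w}"
proof (rule gen_subalg_eq_span)
  show "mu g h \<in> span {a, v, w}" if "g \<in> {a, v, w}" "h \<in> {a, v, w}" for g h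
    using frame_products_in_span[OF frame_idem frame_zero frame_eta frame_table that] .
  show "{comb phi 1 1, comb phi 1 (-1)} \<subseteq> span {a, v, w}"
    by (auto simp: mem_span_frame_iff)
  let ?b = "comb phi 1 1" and ?c = "comb phi 1 (-1)"
  let ?V = "gen_subalg sc mu {?b, ?c}"
  note V_closed = subspace_diff[OF gen_subalg_subspace] subspace_scale[OF gen_subalg_subspace]
    gen_subalg_mult_closed
  note V_subst = forw_subst[where P = "\<lambda>x. x \<in> ?V"]
  have bc: "?b \<in> ?V" "?c \<in> ?V"
    using gen_subalg_base by blast+
  have "comb 0 0 1 = sc (1/2) (?b - ?c)"
    using two_nonzero by (simp add: comb_diff comb_scale)
  then have w: "w \<in> ?V"
    unfolding comb_basis by (rule V_subst) (intro V_closed bc)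
  \<comment> \<open>eliminating \<open>v\<close> between \<open>b - w\<close> and \<open>b w\<close> leaves a multiple of \<open>a\<close>\<close>
  have "sc (1/2 - eta + phi) (?b - comb 0 0 1) - (mu ?b (comb 0 0 1) - sc (1/2) (comb 0 0 1))
      = comb (phi * (2 * phi - eta - 1/2)) 0 0"
    using two_nonzero by (simp add: mult_comb comb_diff comb_scale comb_eq_iff algebra_simps)
  then have "comb 1 0 0 = sc (1 / (phi * (2 * phi - eta - 1/2)))
      (sc (1/2 - eta + phi) (?b - comb 0 0 1) - (mu ?b (comb 0 0 1) - sc (1/2) (comb 0 0 1)))"
    using D by (simp add: comb_scale)
  then have a: "a \<in> ?V"
    unfolding comb_basis by (rule V_subst) (intro V_closed bc w)
  have "comb 0 1 0 = ?b - sc phi (comb 1 0 0) - comb 0 0 1"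
    by (simp add: comb_diff comb_scale)
  then have "v \<in> ?V"
    unfolding comb_basis by (rule V_subst) (intro V_closed bc a w)
  with a w show "{a, v, w} \<subseteq> ?V"
    by blast
qed

lemma mult_tau_self:
  "mu (comb phi 1 1) (comb phi 1 1) = comb phi 1 1"
  "mu (comb phi 1 (-1)) (comb phi 1 (-1)) = comb phi 1 (-1)"
  using two_nonzero four_nonzero by (simp_all add: mult_comb comb_eq_iff field_simps)

lemma mult_tau_pair:
  "mu (comb phi 1 1) (comb phi 1 (-1)) = comb (2 * phi * phi - phi) (2 * eta - 2 * phi) 0"
  by (simp add: mult_comb comb_eq_iff algebra_simps)

lemma dim_gen_subalg_tau_pair:
  assumes "mu (comb phi 1 1) (comb phi 1 (-1)) \<in> span {comb phi 1 1, comb phi 1 (-1)}"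
  shows "dim (gen_subalg sc mu {comb phi 1 1, comb phi 1 (-1)}) = 2"
proof -
  let ?b = "comb phi 1 1" and ?c = "comb phi 1 (-1)"
  have V: "gen_subalg sc mu {?b, ?c} = span {?b, ?c}"
  proof (rule gen_subalg_eq_span)
    show "mu g h \<in> span {?b, ?c}" if "g \<in> {?b, ?c}" "h \<in> {?b, ?c}" for g h
      using that assms mult_tau_self mult_commute[of ?b ?c]
      by (auto intro: span_base)
  qed (auto intro: span_base gen_subalg_base[THEN subsetD])
  have "?b \<notin> span {?c}"
  proof
    assume "?b \<in> span {?c}"
    then obtain k where "?b = sc k ?c"
      by (auto simp: span_singleton)
    then show False
      using two_nonzero by (auto simp: comb_scale comb_eq_iff)
  qed
  moreover have "?c \<noteq> 0"
    by (simp add: comb_eq_zero_iff)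
  ultimately have "independent {?b, ?c}" and "?b \<noteq> ?c"
    using span_base[of ?c "{?c}"] by (auto simp: independent_insert)
  then show ?thesis
    unfolding V using dim_span_eq_card_independent by simp
qed

lemma identity_frame:
  assumes "eta = 1/2" "phi \<noteq> 1"
  shows "is_identity_of mu (span {a, v, w}) (comb 1 (1 / (1 - phi)) 0)"
proof -
  have "mu (comb 1 (1 / (1 - phi)) 0) (comb x y z) = comb x y z" for x y z
    using assms(2) two_nonzero four_nonzero
    by (simp add: assms(1) mult_comb comb_eq_iff field_simps right_diff_distrib[symmetric])
  then show ?thesis
    unfolding is_identity_of_def by (auto simp: mem_span_frame_iff)
qed

lemma span_tau_pair_inter:
  assumes "m \<noteq> 0"
  shows "span {comb phi 1 1, comb phi 1 (-1)} \<inter> span {comb 1 m 0, a}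
    = range (\<lambda>r. sc r (comb phi 1 0))"
proof -
  have bc: "sc p (comb phi 1 1) + sc q (comb phi 1 (-1)) = comb (phi * (p + q)) (p + q) (p - q)"
    for p q by (simp add: comb_scale comb_add algebra_simps)
  have ea: "sc p (comb 1 m 0) + sc q a = comb (p + q) (p * m) 0" for p q
    by (simp add: comb_def scale_left_distrib scale_right_distrib)
  have "x \<in> span {comb phi 1 1, comb phi 1 (-1)} \<inter> span {comb 1 m 0, a}
      \<longleftrightarrow> (\<exists>r. x = comb (phi * r) r 0)" for x
  proof
    assume "x \<in> span {comb phi 1 1, comb phi 1 (-1)} \<inter> span {comb 1 m 0, a}"
    then obtain p q p' q' where "x = comb (phi * (p + q)) (p + q) (p - q)"
        and "x = comb (p' + q') (p' * m) 0"
      unfolding Int_iff mem_span_pair_iff bc ea by blast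
    then show "\<exists>r. x = comb (phi * r) r 0"
      by (auto simp: comb_eq_iff)
  next
    assume "\<exists>r. x = comb (phi * r) r 0"
    then obtain r where r: "x = comb (phi * r) r 0" ..
    have "x = sc (r / 2) (comb phi 1 1) + sc (r / 2) (comb phi 1 (-1))"
      unfolding r bc using two_nonzero by (simp add: comb_eq_iff)
    moreover have "x = sc (r / m) (comb 1 m 0) + sc (phi * r - r / m) a"
      unfolding r ea using assms by (simp add: comb_eq_iff)
    ultimately show "x \<in> span {comb phi 1 1, comb phi 1 (-1)} \<inter> span {comb 1 m 0, a}"
      unfolding Int_iff mem_span_pair_iff by blast
  qed
  then show ?thesis
    by (auto simp: comb_scale mult.commute)
qed

end

section \<open>The exceptional cases\<close>

text \<open>Alternatives (i) and (ii) of the theorem, with \<open>c\<close> the Miyamoto image of \<open>b\<close> and \<open>e\<close>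
  the identity of \<open>N\<close>.\<close>

definition alternative_i ::
    "('f::field \<Rightarrow> 'v::ab_group_add \<Rightarrow> 'v) \<Rightarrow> ('v \<Rightarrow> 'v \<Rightarrow> 'v) \<Rightarrow> 'v \<Rightarrow> 'v \<Rightarrow> 'v \<Rightarrow> 'v \<Rightarrow> bool"
  where "alternative_i sc mu a b c e \<longleftrightarrow>
    mu a b = sc (-1/2) e + sc (1/2) a + sc (1/2) b
    \<and> mu b c = sc (1/2) b + sc (1/2) c
    \<and> vector_space.dim sc (gen_subalg sc mu {b, c}) = 2
    \<and> module.span sc {b, c} \<inter> module.span sc {e, a} = range (\<lambda>t. sc t (e - a))"

definition alternative_ii ::
    "('f::field \<Rightarrow> 'v::ab_group_add \<Rightarrow> 'v) \<Rightarrow> ('v \<Rightarrow> 'v \<Rightarrow> 'v) \<Rightarrow> 'v \<Rightarrow> 'v \<Rightarrow> 'v \<Rightarrow> 'v \<Rightarrow> bool"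
  where "alternative_ii sc mu a b c e \<longleftrightarrow>
    mu a b = sc (-1/4) e + sc (1/2) a + sc (1/2) b
    \<and> mu b c = 0
    \<and> vector_space.dim sc (gen_subalg sc mu {b, c}) = 2
    \<and> module.span sc {b, c} \<inter> module.span sc {e, a} = range (\<lambda>t. sc t e)"

context pair_frame
begin

lemma alternative_i_at_zero:
  assumes "eta = 1/2" "phi = 0"
  defines "e \<equiv> comb 1 (1 / (1 - phi)) 0"
  shows "alternative_i sc mu a (comb phi 1 1) (comb phi 1 (-1)) e"
    and "\<not> alternative_ii sc mu a (comb phi 1 1) (comb phi 1 (-1)) e"
proof -
  let ?b = "comb phi 1 1" and ?c = "comb phi 1 (-1)"
  have e: "e = comb 1 1 0"
    unfolding e_def by (simp add: assms(2))
  have ab: "mu a ?b = comb 0 0 (1/2)"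
    by (simp add: assms(1,2) mult_a_comb)
  have bc: "mu ?b ?c = sc (1/2) ?b + sc (1/2) ?c"
    unfolding mult_tau_pair using two_nonzero
    by (simp add: assms(1,2) comb_scale comb_add comb_eq_iff)
  have "mu a ?b = sc (-1/2) e + sc (1/2) a + sc (1/2) ?b"
    unfolding ab e scale_a_eq_comb by (simp add: assms(2) comb_scale comb_add comb_eq_iff)
  moreover have "mu a ?b \<noteq> sc (-1/4) e + sc (1/2) a + sc (1/2) ?b"
    using two_nonzero four_nonzero unfolding ab e scale_a_eq_comb
    by (simp add: assms(2) comb_scale comb_add comb_eq_iff field_simps)
  moreover have "dim (gen_subalg sc mu {?b, ?c}) = 2"
    using bc by (intro dim_gen_subalg_tau_pair) (auto simp: mem_span_pair_iff)
  moreover have "span {?b, ?c} \<inter> span {e, a} = range (\<lambda>t. sc t (e - a))"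
  proof -
    have "e - a = comb phi 1 0"
      unfolding e by (simp add: assms(2) comb_def)
    then show ?thesis
      using span_tau_pair_inter[of 1] e by simp
  qed
  ultimately show "alternative_i sc mu a ?b ?c e" "\<not> alternative_ii sc mu a ?b ?c e"
    unfolding alternative_i_def alternative_ii_def using bc by simp_all
qed

lemma alternative_ii_at_half:
  assumes "eta = 1/2" "phi = 1/2"
  defines "e \<equiv> comb 1 (1 / (1 - phi)) 0"
  shows "alternative_ii sc mu a (comb phi 1 1) (comb phi 1 (-1)) e"
    and "\<not> alternative_i sc mu a (comb phi 1 1) (comb phi 1 (-1)) e"
proof -
  let ?b = "comb phi 1 1" and ?c = "comb phi 1 (-1)"
  have e: "e = comb 1 2 0"
    unfolding e_def using two_nonzero by (simp add: assms(2) comb_eq_iff field_simps)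
  have ab: "mu a ?b = comb (1/2) 0 (1/2)"
    by (simp add: assms(1,2) mult_a_comb)
  have bc: "mu ?b ?c = 0"
    unfolding mult_tau_pair by (simp add: assms(1,2) comb_eq_zero_iff)
  have "mu a ?b = sc (-1/4) e + sc (1/2) a + sc (1/2) ?b"
    using two_nonzero four_nonzero unfolding ab e scale_a_eq_comb
    by (simp add: assms(2) comb_scale comb_add comb_eq_iff field_simps)
  moreover have "mu a ?b \<noteq> sc (-1/2) e + sc (1/2) a + sc (1/2) ?b"
    using two_nonzero unfolding ab e scale_a_eq_comb
    by (simp add: assms(2) comb_scale comb_add comb_eq_iff field_simps)
  moreover have "dim (gen_subalg sc mu {?b, ?c}) = 2"
    using bc by (intro dim_gen_subalg_tau_pair) (simp add: span_zero)
  moreover have "span {?b, ?c} \<inter> span {e, a} = range (\<lambda>t. sc t e)"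
  proof -
    have "e = sc 2 (comb phi 1 0)"
      unfolding e using two_nonzero by (simp add: assms(2) comb_scale)
    then have "range (\<lambda>t. sc t (comb phi 1 0)) = range (\<lambda>t. sc t e)"
      using range_scale_rescale[OF two_nonzero] by metis
    then show ?thesis
      using span_tau_pair_inter[of 2] two_nonzero e by simp
  qed
  ultimately show "alternative_ii sc mu a ?b ?c e" "\<not> alternative_i sc mu a ?b ?c e"
    unfolding alternative_i_def alternative_ii_def using bc by simp_all
qed

end

lemma half_neq_one: "(1::'a::field) / 2 \<noteq> 1"
proof
  assume "(1::'a) / 2 = 1"
  then have "(1::'a) + 1 = 1 + 0"
    by (simp add: divide_eq_1_iff)
  then show False
    by (simp only: add_left_cancel zero_neq_one[symmetric])
qed

lemma exceptional_coefficients: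
  fixes eta phi psi :: "'f::field"
  assumes two: "(2::'f) \<noteq> 0" and eta_nonzero: "eta \<noteq> 0"
    and psi: "psi * (1 - eta) = eta * (1/2 - eta + phi)"
    and phi: "phi * (1 - eta) = eta * (1/2 - eta + psi)"
    and D: "phi * (2 * phi - eta - 1/2) = 0"
  shows "eta = 1/2 \<and> (phi = 0 \<or> phi = 1/2)"
proof -
  \<comment> \<open>subtracting the two mirror relations\<close>
  have "psi + eta * eta = phi + eta * eta"
    using psi phi by (simp add: algebra_simps)
  then have "psi = phi"
    by simp
  with phi two have "(1 - 2 * eta) * (2 * phi - eta) = 0"
    by (simp add: field_simps)
  moreover have "2 * phi - eta \<noteq> 0"
  proof
    assume "2 * phi - eta = 0"
    then have "eta = 2 * phi"
      by simp
    with D two have "phi = 0"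
      by simp
    with \<open>eta = 2 * phi\<close> eta_nonzero show False
      by simp
  qed
  ultimately have "1 - 2 * eta = 0"
    by simp
  then have "eta = 1/2"
    using two by (simp add: field_simps)
  have "2 * phi - eta - 1/2 = 2 * phi - (1/2 + 1/2)"
    unfolding \<open>eta = 1/2\<close> by (simp only: diff_diff_eq)
  also have "\<dots> = 2 * phi - 1"
    using two by (simp add: add_divide_distrib[symmetric])
  finally have "phi * (2 * phi - 1) = 0"
    using D by (simp only:)
  with \<open>eta = 1/2\<close> two show ?thesis
    by (auto simp: field_simps)
qed

context pair_frame
begin

lemma tau_pair_dichotomy:
  assumes "phi * (1 - eta) = eta * (1/2 - eta + psi)"
    and "psi * (1 - eta) = eta * (1/2 - eta + phi)"
  shows "gen_subalg sc mu {comb phi 1 1, comb phi 1 (-1)} = span {a, v, w}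
    \<or> (eta = 1/2 \<and> (\<exists>e. is_identity_of mu (span {a, v, w}) e
         \<and> alternative_i sc mu a (comb phi 1 1) (comb phi 1 (-1)) e
           \<noteq> alternative_ii sc mu a (comb phi 1 1) (comb phi 1 (-1)) e))"
proof (cases "phi * (2 * phi - eta - 1/2) = 0")
  case False
  then show ?thesis
    using gen_subalg_tau_pair_eq_span_frame by simp
next
  case True
  then have eta_half: "eta = 1/2" and phi: "phi = 0 \<or> phi = 1/2"
    using exceptional_coefficients[OF two_nonzero eta_nonzero assms(2,1)] by auto
  have "phi \<noteq> 1"
    using phi half_neq_one zero_neq_one by metis
  then have "is_identity_of mu (span {a, v, w}) (comb 1 (1 / (1 - phi)) 0)"
    by (rule identity_frame[OF eta_half])
  moreover have "alternative_i sc mu a (comb phi 1 1) (comb phi 1 (-1)) (comb 1 (1 / (1 - phi)) 0)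
      \<noteq> alternative_ii sc mu a (comb phi 1 1) (comb phi 1 (-1)) (comb 1 (1 / (1 - phi)) 0)"
    using phi alternative_i_at_zero[OF eta_half] alternative_ii_at_half[OF eta_half] by blast
  ultimately show ?thesis
    using eta_half by blast
qed

end

theorem lemma3p11:
  fixes sc :: "'f::field \<Rightarrow> 'v::ab_group_add \<Rightarrow> 'v"
    and mu :: "'v \<Rightarrow> 'v \<Rightarrow> 'v"
    and eta :: 'f and a b :: 'v
  assumes vs: "vector_space sc"
    and bilin: "\<And>x. Vector_Spaces.linear sc sc (mu x)"
    and comm: "\<And>x y. mu x y = mu y x"
    and char: "(2::'f) \<noteq> 0"
    and eta: "eta \<noteq> 0" "eta \<noteq> 1"
    and prim: "primitive_axial_jordan sc mu eta"
    and ax_a: "is_axis sc mu eta a" and ax_b: "is_axis sc mu eta b"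
    and ab: "a \<noteq> b"
    and dimN: "vector_space.dim sc (gen_subalg sc mu {a, b}) = 3"
  shows "gen_subalg sc mu {b, miyamoto sc mu eta a b} = gen_subalg sc mu {a, b}
    \<or> (eta = 1/2 \<and>
       (\<exists>e. is_identity_of mu (gen_subalg sc mu {a, b}) e \<and>
         ((mu a b = sc (-1/2) e + sc (1/2) a + sc (1/2) b
           \<and> mu b (miyamoto sc mu eta a b) = sc (1/2) b + sc (1/2) (miyamoto sc mu eta a b)
           \<and> vector_space.dim sc (gen_subalg sc mu {b, miyamoto sc mu eta a b}) = 2
           \<and> module.span sc {b, miyamoto sc mu eta a b} \<inter> module.span sc {e, a}
               = range (\<lambda>t. sc t (e - a)))
          \<noteq>
          (mu a b = sc (-1/4) e + sc (1/2) a + sc (1/2) b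
           \<and> mu b (miyamoto sc mu eta a b) = 0
           \<and> vector_space.dim sc (gen_subalg sc mu {b, miyamoto sc mu eta a b}) = 2
           \<and> module.span sc {b, miyamoto sc mu eta a b} \<inter> module.span sc {e, a}
               = range (\<lambda>t. sc t e)))))"
proof -
  interpret jordan_type sc mu eta
    using vs bilin comm char eta
    by (simp add: jordan_type_def jordan_type_axioms_def comm_algebra_def
        comm_algebra_axioms_def Vector_Spaces.linear_iff)
  obtain phi b0 b1 where b: "b = sc phi a + b0 + b1"
      "b0 \<in> eigsp sc mu a 0" "b1 \<in> eigsp sc mu a eta"
    using axis_decomp[OF ax_a] .
  obtain psi a0 a1 where a: "a = sc psi b + a0 + a1"
      "a0 \<in> eigsp sc mu b 0" "a1 \<in> eigsp sc mu b eta"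
    using axis_decomp[OF ax_b] .
  note frame = axis_pair_frame[OF ax_a ax_b dimN b a]
  have psi: "phi * (1 - eta) = eta * (1/2 - eta + psi)"
    using axis_pair_frame(3)[OF ax_b ax_a _ a b] dimN by (simp add: insert_commute)
  interpret pair_frame sc mu eta a b0 b1 phi
    by (rule frame(1))
  have bc: "comb phi 1 1 = b" "comb phi 1 (-1) = miyamoto sc mu eta a b"
    using b miyamoto_axis_decomp[OF ax_a b] by (simp_all add: comb_def)
  from tau_pair_dichotomy[OF psi frame(3)] show ?thesis
    unfolding frame(2)[symmetric] bc alternative_i_def alternative_ii_def .
qed

end
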